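(* For each $n\in\mathbb{N}$, if a labelled formula $w:\phi$ (with $\phi\in\mathcal{L}^1$) is derivable in $\mathsf{Ldm}_{n}^{1}\mathsf{L}$, then it has a derivation in $\mathsf{Ldm}_{n}^{1}\mathsf{L}$ in which every sequent is forestlike.
   Context: Single-agent setting: $Ag=\{1\}$. Formulas $\phi ::= p \mid \overline{p} \mid (\phi\wedge\phi) \mid (\phi\vee\phi) \mid \Box\phi \mid \Diamond\phi \mid [1]\phi \mid \langle 1\rangle\phi$. A labelled sequent $\mathcal{R},\Gamma$ consists of a multiset $\mathcal{R}$ of relational atoms $\mathcal{R}_1xy$ and a multiset $\Gamma$ of labelled formulas $x:\phi$. Calculus $\mathsf{Ldm}_{n}^{1}\mathsf{L}$ (premise(s) / conclusion; derivations are finite trees with $(\mathsf{id})$ leaves): $(\mathsf{id})$: / $\mathcal{R}, w:p, w:\overline{p},\Gamma$. $(\wedge)$: $\mathcal{R}, w:\phi\wedge\psi, w:\phi,\Gamma$ and $\mathcal{R}, w:\phi\wedge\psi, w:\psi,\Gamma$ / $\mathcal{R}, w:\phi\wedge\psi,\Gamma$. $(\vee)$: $\mathcal{R}, w:\phi\vee\psi, w:\phi, w:\psi,\Gamma$ / $\mathcal{R}, w:\phi\vee\psi,\Gamma$. $(\Box)$: $\mathcal{R}, w:\Box\phi, v:\phi,\Gamma$ / $\mathcal{R}, w:\Box\phi,\Gamma$ ($v$ fresh). $(\Diamond)$: $\mathcal{R}, w:\Diamond\phi, u:\phi,\Gamma$ / $\mathcal{R}, w:\Diamond\phi,\Gamma$.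 $(\mathsf{IOA})$: $\mathcal{R},\mathcal{R}_1uv,\Gamma$ / $\mathcal{R},\Gamma$ ($v$ fresh). $([1])$: $\mathcal{R},\mathcal{R}_1wv, w:[1]\phi, v:\phi,\Gamma$ / $\mathcal{R}, w:[1]\phi,\Gamma$ ($v$ fresh). $(\mathsf{Pr}_1)$: $\mathcal{R}, w:\langle 1\rangle\phi, u:\phi,\Gamma$ / $\mathcal{R}, w:\langle 1\rangle\phi,\Gamma$, applicable only if $w=u$ or there are labels $w=z_0,\dots,z_k=u$ ($k\ge1$) with $\mathcal{R}_1z_lz_{l+1}\in\mathcal{R}$ or $\mathcal{R}_1z_{l+1}z_l\in\mathcal{R}$ for each $l<k$. $(\mathsf{APC}^1_n)$ (only if $n>0$): premises $\mathcal{R},\mathcal{R}_1w_kw_j,\Gamma$ for all $0\le k\le n-1$, $k+1\le j\le n$ / $\mathcal{R},\Gamma$. "Fresh" means not occurring in the conclusion. Forestlike sequents. The graph $G(\Lambda)$ of a sequent $\Lambda$ has the labels of $\Lambda$ as vertices and a directed edge $(x,y)$ for each $\mathcal{R}_1xy\in\Lambda$. A graph is a tree iff it has a node (root) with exactly one directed path to every other node; a forest is a disjoint union of trees. $\Lambda$ is forestlike iff $G(\Lambda)$ is a forest. *)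

theory Defs
  imports Main "HOL-Library.Multiset"
begin

text \<open>Formulas of the single-agent language (atoms indexed by nat).
  Stit is [1], DStit is the dual <1>.\<close>
datatype form =
    Atom nat | NAtom nat
  | And form form | Or form form
  | Box form | Dia form
  | Stit form | DStit form

type_synonym label = nat

text \<open>A labelled sequent: multiset of relational atoms R_1 x y (pairs (x,y))
  and multiset of labelled formulas x:phi.\<close>
type_synonym sequent = "(label \<times> label) multiset \<times> (label \<times> form) multiset"

definition labels :: "sequent \<Rightarrow> label set" where
  "labels S = fst ` set_mset (fst S) \<union> snd ` set_mset (fst S) \<union> fst ` set_mset (snd S)"

definition fresh :: "label \<Rightarrow> sequent \<Rightarrow> bool" where
  "fresh v S \<longleftrightarrow> v \<notin> labels S"

definition connected :: "(label \<times> label) multiset \<Rightarrow> label \<Rightarrow> label \<Rightarrow> bool" where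
  "connected R w u \<longleftrightarrow> (\<lambda>x y. (x, y) \<in># R \<or> (y, x) \<in># R)\<^sup>*\<^sup>* w u"

text \<open>Derivations in Ldm_n^1 L, restricted so that every sequent in the derivation
  satisfies the predicate P.  With P = (\<lambda>_. True) this is plain derivability.\<close>
inductive deriv :: "(sequent \<Rightarrow> bool) \<Rightarrow> nat \<Rightarrow> sequent \<Rightarrow> bool"
  for P :: "sequent \<Rightarrow> bool" and n :: nat where
  id: "P (R, add_mset (w, Atom p) (add_mset (w, NAtom p) \<Gamma>))
     \<Longrightarrow> deriv P n (R, add_mset (w, Atom p) (add_mset (w, NAtom p) \<Gamma>))"
| conj: "P (R, add_mset (w, And \<phi> \<psi>) \<Gamma>)
     \<Longrightarrow> deriv P n (R, add_mset (w, And \<phi> \<psi>) (add_mset (w, \<phi>) \<Gamma>))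
     \<Longrightarrow> deriv P n (R, add_mset (w, And \<phi> \<psi>) (add_mset (w, \<psi>) \<Gamma>))
     \<Longrightarrow> deriv P n (R, add_mset (w, And \<phi> \<psi>) \<Gamma>)"
| disj: "P (R, add_mset (w, Or \<phi> \<psi>) \<Gamma>)
     \<Longrightarrow> deriv P n (R, add_mset (w, Or \<phi> \<psi>) (add_mset (w, \<phi>) (add_mset (w, \<psi>) \<Gamma>)))
     \<Longrightarrow> deriv P n (R, add_mset (w, Or \<phi> \<psi>) \<Gamma>)"
| box: "P (R, add_mset (w, Box \<phi>) \<Gamma>)
     \<Longrightarrow> fresh v (R, add_mset (w, Box \<phi>) \<Gamma>)
     \<Longrightarrow> deriv P n (R, add_mset (w, Box \<phi>) (add_mset (v, \<phi>) \<Gamma>))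
     \<Longrightarrow> deriv P n (R, add_mset (w, Box \<phi>) \<Gamma>)"
| dia: "P (R, add_mset (w, Dia \<phi>) \<Gamma>)
     \<Longrightarrow> deriv P n (R, add_mset (w, Dia \<phi>) (add_mset (u, \<phi>) \<Gamma>))
     \<Longrightarrow> deriv P n (R, add_mset (w, Dia \<phi>) \<Gamma>)"
| ioa: "P (R, \<Gamma>)
     \<Longrightarrow> fresh v (R, \<Gamma>)
     \<Longrightarrow> deriv P n (add_mset (u, v) R, \<Gamma>)
     \<Longrightarrow> deriv P n (R, \<Gamma>)"
| stit: "P (R, add_mset (w, Stit \<phi>) \<Gamma>)
     \<Longrightarrow> fresh v (R, add_mset (w, Stit \<phi>) \<Gamma>)
     \<Longrightarrow> deriv P n (add_mset (w, v) R, add_mset (w, Stit \<phi>) (add_mset (v, \<phi>) \<Gamma>))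
     \<Longrightarrow> deriv P n (R, add_mset (w, Stit \<phi>) \<Gamma>)"
| pr: "P (R, add_mset (w, DStit \<phi>) \<Gamma>)
     \<Longrightarrow> connected R w u
     \<Longrightarrow> deriv P n (R, add_mset (w, DStit \<phi>) (add_mset (u, \<phi>) \<Gamma>))
     \<Longrightarrow> deriv P n (R, add_mset (w, DStit \<phi>) \<Gamma>)"
| apc: "P (R, \<Gamma>)
     \<Longrightarrow> 0 < n
     \<Longrightarrow> (\<forall>k j. k \<le> n - 1 \<and> k + 1 \<le> j \<and> j \<le> n
            \<longrightarrow> deriv P n (add_mset (ws k, ws j) R, \<Gamma>))
     \<Longrightarrow> deriv P n (R, \<Gamma>)"

abbreviation derivable :: "nat \<Rightarrow> sequent \<Rightarrow> bool" where
  "derivable n S \<equiv> deriv (\<lambda>_. True) n S"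

definition edges :: "sequent \<Rightarrow> (label \<times> label) set" where
  "edges S = set_mset (fst S)"

definition dpath :: "('a \<times> 'a) set \<Rightarrow> 'a list \<Rightarrow> 'a \<Rightarrow> 'a \<Rightarrow> bool" where
  "dpath E vs x y \<longleftrightarrow> vs \<noteq> [] \<and> hd vs = x \<and> last vs = y \<and>
     (\<forall>i. Suc i < length vs \<longrightarrow> (vs ! i, vs ! Suc i) \<in> E)"

definition is_tree :: "'a set \<Rightarrow> ('a \<times> 'a) set \<Rightarrow> bool" where
  "is_tree V E \<longleftrightarrow> (\<exists>r\<in>V. \<forall>v\<in>V. v \<noteq> r \<longrightarrow> (\<exists>!vs. dpath E vs r v))"

definition is_forest :: "'a set \<Rightarrow> ('a \<times> 'a) set \<Rightarrow> bool" where
  "is_forest V E \<longleftrightarrow> (\<exists>Ps. (\<forall>C\<in>Ps. C \<noteq> {}) \<and> \<Union>Ps = V \<and>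
      (\<forall>C\<in>Ps. \<forall>D\<in>Ps. C \<noteq> D \<longrightarrow> C \<inter> D = {}) \<and>
      (\<forall>(x, y)\<in>E. \<exists>C\<in>Ps. x \<in> C \<and> y \<in> C) \<and>
      (\<forall>C\<in>Ps. is_tree C (E \<inter> C \<times> C)))"

definition forestlike :: "sequent \<Rightarrow> bool" where
  "forestlike S \<longleftrightarrow> is_forest (labels S) (edges S)"

end

theory Submission
  imports Defs
begin

(* A derivation of (R, \<Gamma>) is replayed on (R', \<Gamma>), where R' is a branching (acyclic, every
  label has at most one parent, hence a forest) on the labels of (R, \<Gamma>) in which the two ends
  of every atom of R are connected. Only Pr_1 looks at the relational atoms, and only through
  undirected connectivity, so it survives the replacement. IOA and [1] add an edge to a fresh
  label, i.e. a new leaf. For APC, if some premise adds an atom between labels already connected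
  in R', that premise alone suffices; otherwise the w_k lie in pairwise different trees and APC is
  re-applied to their roots, each premise joining two trees by an edge into a root.
  Starting from R = R' = {} gives the theorem. *)

definition branching :: "('a \<times> 'a) set \<Rightarrow> bool" where
  "branching E \<longleftrightarrow> acyclic E \<and> (\<forall>x x' y. (x, y) \<in> E \<longrightarrow> (x', y) \<in> E \<longrightarrow> x = x')"

lemma branching_subset: "branching E \<Longrightarrow> F \<subseteq> E \<Longrightarrow> branching F"
  unfolding branching_def by (meson acyclic_subset subsetD)

lemma branching_insert:
  "branching E \<Longrightarrow> b \<notin> Range E \<Longrightarrow> (b, a) \<notin> E\<^sup>* \<Longrightarrow> branching (insert (a, b) E)"
  unfolding branching_def by blast

lemma dpath_snoc_iff:
  assumes "vs \<noteq> []"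
  shows "dpath E (vs @ [b]) x y \<longleftrightarrow> dpath E vs x (last vs) \<and> (last vs, b) \<in> E \<and> b = y"
  using assms unfolding dpath_def
  by (auto simp: nth_append last_conv_nth less_Suc_eq split: if_splits)
    (metis diff_Suc_Suc minus_nat.diff_0)

lemma dpath_imp_rtrancl: "dpath E vs x y \<Longrightarrow> (x, y) \<in> E\<^sup>*"
proof (induction vs arbitrary: y rule: rev_induct)
  case Nil
  then show ?case by (simp add: dpath_def)
next
  case (snoc b vs)
  show ?case
  proof (cases "vs = []")
    case True
    with snoc.prems show ?thesis by (auto simp: dpath_def)
  next
    case False
    with snoc show ?thesis by (auto simp: dpath_snoc_iff intro: rtrancl_into_rtrancl)
  qed
qed

lemma branching_dpath_unique:
  assumes "branching E" "dpath E vs r v" "dpath E vs' r v"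
  shows "vs = vs'"
  using assms(2,3)
proof (induction vs arbitrary: v vs' rule: rev_induct)
  case Nil
  then show ?case by (simp add: dpath_def)
next
  case (snoc b ys)
  have no_loop: False if "dpath E zs r (last zs)" "(last zs, r) \<in> E" for zs
    using assms(1) dpath_imp_rtrancl[OF that(1)] that(2)
    unfolding branching_def acyclic_def by (meson rtrancl_into_trancl1)
  obtain ys' b' where vs': "vs' = ys' @ [b']"
    using snoc.prems(2) by (metis dpath_def rev_exhaust)
  consider "ys = []" "ys' = []" | "ys \<noteq> []" "ys' \<noteq> []"
    | "ys = []" "ys' \<noteq> []" | "ys \<noteq> []" "ys' = []"
    by blast
  then show ?case
  proof cases
    case 1
    with snoc.prems vs' show ?thesis by (simp add: dpath_def)
  next
    case 2
    with snoc.prems vs' have "dpath E ys r (last ys)" "(last ys, v) \<in> E" "b = v"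
      and "dpath E ys' r (last ys')" "(last ys', v) \<in> E" "b' = v"
      by (auto simp: dpath_snoc_iff)
    moreover from this have "last ys = last ys'"
      using assms(1) unfolding branching_def by blast
    ultimately show ?thesis using snoc.IH vs' by metis
  next
    case 3
    with snoc.prems(1) have "v = r" by (auto simp: dpath_def)
    with 3 snoc.prems(2) vs' show ?thesis using no_loop[of ys'] by (auto simp: dpath_snoc_iff)
  next
    case 4
    with snoc.prems(2) vs' have "v = r" by (auto simp: dpath_def)
    with 4 snoc.prems(1) show ?thesis using no_loop[of ys] by (auto simp: dpath_snoc_iff)
  qed
qed

lemma rtrancl_imp_dpath_reach:
  assumes "(r, v) \<in> E\<^sup>*"
  shows "\<exists>vs. dpath (E \<inter> E\<^sup>* `` {r} \<times> E\<^sup>* `` {r}) vs r v"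
  using assms
proof (induction rule: rtrancl_induct)
  case base
  show ?case by (rule exI[of _ "[r]"]) (simp add: dpath_def)
next
  case (step y z)
  then obtain vs where "dpath (E \<inter> E\<^sup>* `` {r} \<times> E\<^sup>* `` {r}) vs r y" by blast
  moreover from this have "vs \<noteq> []" "last vs = y" by (simp_all add: dpath_def)
  moreover have "(r, z) \<in> E\<^sup>*"
    using step by (blast intro: rtrancl_into_rtrancl)
  ultimately have "dpath (E \<inter> E\<^sup>* `` {r} \<times> E\<^sup>* `` {r}) (vs @ [z]) r z"
    using step by (auto simp: dpath_snoc_iff)
  then show ?case by blast
qed

lemma branching_reach_is_tree:
  assumes "branching E"
  shows "is_tree (E\<^sup>* `` {r}) (E \<inter> E\<^sup>* `` {r} \<times> E\<^sup>* `` {r})"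
  unfolding is_tree_def
proof (intro bexI[of _ r] ballI impI)
  let ?F = "E \<inter> E\<^sup>* `` {r} \<times> E\<^sup>* `` {r}"
  fix v assume "v \<in> E\<^sup>* `` {r}"
  then have "(r, v) \<in> E\<^sup>*" by simp
  from rtrancl_imp_dpath_reach[OF this] obtain vs where vs: "dpath ?F vs r v" ..
  have branching: "branching ?F"
    using branching_subset[OF assms Int_lower1] .
  show "\<exists>!vs. dpath ?F vs r v"
  proof (rule ex1I)
    show "dpath ?F vs r v" by (fact vs)
  next
    fix vs' assume "dpath ?F vs' r v"
    from branching_dpath_unique[OF branching vs this] show "vs' = vs" by (rule sym)
  qed
qed simp

lemma branching_common_descendant:
  assumes "branching E" "(a, x) \<in> E\<^sup>*" "(b, x) \<in> E\<^sup>*"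
  shows "(a, b) \<in> E\<^sup>* \<or> (b, a) \<in> E\<^sup>*"
  using assms(2,3)
proof (induction arbitrary: b rule: rtrancl_induct)
  case base
  then show ?case by simp
next
  case (step y z)
  from \<open>(b, z) \<in> E\<^sup>*\<close> show ?case
  proof (cases rule: rtranclE)
    case base
    with step.hyps show ?thesis by (blast intro: rtrancl_into_rtrancl)
  next
    case (step y')
    with \<open>(y, z) \<in> E\<close> assms(1) have "y' = y"
      unfolding branching_def by blast
    with step.IH step show ?thesis by blast
  qed
qed

lemma rtrancl_eq_if_notin_Range:
  assumes "(s, s') \<in> E\<^sup>*" "s' \<notin> Range E"
  shows "s = s'"
  using assms by (cases rule: rtranclE) auto

lemma rtrancl_eq_or_in_Field: "(a, x) \<in> E\<^sup>* \<Longrightarrow> a = x \<or> a \<in> Field E"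
  by (cases rule: converse_rtranclE) (auto simp: Field_def)

lemma branching_roots_reach_disjoint:
  assumes "branching E" "r \<notin> Range E" "r' \<notin> Range E" "r \<noteq> r'"
  shows "E\<^sup>* `` {r} \<inter> E\<^sup>* `` {r'} = {}"
proof (intro equalityI subsetI)
  fix x assume "x \<in> E\<^sup>* `` {r} \<inter> E\<^sup>* `` {r'}"
  then have "(r, x) \<in> E\<^sup>*" "(r', x) \<in> E\<^sup>*" by auto
  with assms show "x \<in> {}"
    by (metis branching_common_descendant rtrancl_eq_if_notin_Range)
qed simp

lemma finite_acyclic_root_ancestors:
  assumes "finite E" "acyclic E"
  obtains root where "\<And>x. (root x, x) \<in> E\<^sup>*" "\<And>x. root x \<notin> Range E"
proof -
  have "\<exists>r. (r, x) \<in> E\<^sup>* \<and> r \<notin> Range E" for x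
  proof -
    have "x \<in> {y. (y, x) \<in> E\<^sup>*}" by simp
    with finite_acyclic_wf[OF assms] obtain r
      where r: "(r, x) \<in> E\<^sup>*" and minimal: "\<And>z. (z, r) \<in> E \<Longrightarrow> (z, x) \<notin> E\<^sup>*"
      by (metis mem_Collect_eq wfE_min)
    then have "r \<notin> Range E"
      by (meson RangeE converse_rtrancl_into_rtrancl)
    with r show ?thesis by blast
  qed
  then show thesis
    using that by metis
qed

lemma rtrancl_in_iff_if_Field_subset:
  assumes "(x, y) \<in> E\<^sup>*" "Field E \<subseteq> V"
  shows "x \<in> V \<longleftrightarrow> y \<in> V"
  using assms by (induction rule: rtrancl_induct) (auto simp: Field_def)

lemma finite_branching_is_forest:
  assumes "finite E" "branching E" "Field E \<subseteq> V"
  shows "is_forest V E"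
proof -
  let ?reach = "\<lambda>r. E\<^sup>* `` {r}"
  let ?Ps = "?reach ` (V - Range E)"
  have "acyclic E"
    using assms(2) by (simp add: branching_def)
  have root: "\<exists>r \<in> V - Range E. x \<in> ?reach r" if "x \<in> V" for x
  proof -
    obtain r where r: "(r, x) \<in> E\<^sup>*" "r \<notin> Range E"
      using finite_acyclic_root_ancestors[OF assms(1) \<open>acyclic E\<close>] by metis
    moreover from r(1) that have "r \<in> V"
      using rtrancl_in_iff_if_Field_subset[OF _ assms(3)] by blast
    ultimately show ?thesis by blast
  qed
  have reach_subset: "?reach r \<subseteq> V" if "r \<in> V" for r
    using that rtrancl_in_iff_if_Field_subset[OF _ assms(3)] by blast
  show ?thesis
    unfolding is_forest_def
  proof (intro exI[of _ ?Ps] conjI ballI)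
    show "\<Union> ?Ps = V"
      using root reach_subset by blast
  next
    fix C D assume "C \<in> ?Ps" "D \<in> ?Ps"
    then show "C \<noteq> D \<longrightarrow> C \<inter> D = {}"
      using branching_roots_reach_disjoint[OF assms(2)] by blast
  next
    fix e assume "e \<in> E"
    then obtain x y where e: "e = (x, y)" "(x, y) \<in> E" by (cases e) simp
    then have "x \<in> V"
      using assms(3) by (auto simp: Field_def)
    then obtain r where "r \<in> V - Range E" "x \<in> ?reach r"
      using root by blast
    moreover from this e have "y \<in> ?reach r"
      by (blast intro: rtrancl_into_rtrancl)
    ultimately show "case e of (x, y) \<Rightarrow> \<exists>C \<in> ?Ps. x \<in> C \<and> y \<in> C"
      using e by blast
  next
    fix C assume "C \<in> ?Ps"
    then show "C \<noteq> {}" "is_tree C (E \<inter> C \<times> C)"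
      using branching_reach_is_tree[OF assms(2)] by auto
  qed
qed

lemma labels_eq: "labels (R, \<Gamma>) = Field (set_mset R) \<union> fst ` set_mset \<Gamma>"
  unfolding labels_def Field_def Domain_fst Range_snd by auto

lemma branching_imp_forestlike: "branching (set_mset R) \<Longrightarrow> forestlike (R, \<Gamma>)"
  unfolding forestlike_def edges_def
  by (rule finite_branching_is_forest) (auto simp: labels_eq)

lemma connected_refl: "connected R x x"
  by (simp add: connected_def)

lemma connected_trans: "connected R x y \<Longrightarrow> connected R y z \<Longrightarrow> connected R x z"
  unfolding connected_def by (rule rtranclp_trans)

lemma connected_sym:
  assumes "connected R x y"
  shows "connected R y x"
proof -
  have "(\<lambda>x y. (x, y) \<in># R \<or> (y, x) \<in># R) = symclp (\<lambda>x y. (x, y) \<in># R)"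
    by (simp add: symclp_def fun_eq_iff)
  with assms show ?thesis
    unfolding connected_def by (metis rtranclp_symclp_sym)
qed

lemma connected_if_mem: "(x, y) \<in># R \<Longrightarrow> connected R x y"
  unfolding connected_def by auto

lemma connected_mono:
  assumes "\<forall>(x, y) \<in># R. connected R' x y" "connected R a b"
  shows "connected R' a b"
  using assms(2) unfolding connected_def[of R]
proof (induction rule: rtranclp_induct)
  case base
  show ?case by (rule connected_refl)
next
  case (step b c)
  with assms(1) have "connected R' b c"
    using connected_sym by blast
  with step.IH show ?case by (rule connected_trans)
qed

lemma connected_add_mset: "connected R a b \<Longrightarrow> connected (add_mset e R) a b"
  by (rule connected_mono[of R]) (auto intro: connected_if_mem)

lemma rtrancl_imp_connected: "(a, b) \<in> (set_mset R)\<^sup>* \<Longrightarrow> connected R a b"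
  by (induction rule: rtrancl_induct) (auto intro: connected_refl connected_if_mem connected_trans)

definition covering_branching ::
    "(label \<times> label) multiset \<Rightarrow> (label \<times> form) multiset \<Rightarrow> (label \<times> label) multiset \<Rightarrow> bool" where
  "covering_branching R \<Gamma> R' \<longleftrightarrow> branching (set_mset R') \<and> Field (set_mset R') \<subseteq> labels (R, \<Gamma>)
     \<and> (\<forall>(x, y) \<in># R. connected R' x y)"

lemma covering_forestlike: "covering_branching R \<Gamma> R' \<Longrightarrow> forestlike (R', \<Gamma>)"
  unfolding covering_branching_def by (blast intro: branching_imp_forestlike)

lemma covering_connected:
  "covering_branching R \<Gamma> R' \<Longrightarrow> connected R x y \<Longrightarrow> connected R' x y"
  unfolding covering_branching_def by (blast intro: connected_mono)

lemma covering_fresh: "covering_branching R \<Gamma> R' \<Longrightarrow> fresh v (R, \<Gamma>) \<Longrightarrow> fresh v (R', \<Gamma>)"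
  unfolding covering_branching_def fresh_def labels_eq by blast

lemma covering_add_formula:
  "covering_branching R (add_mset A \<Gamma>) R' \<Longrightarrow> covering_branching R (add_mset A (add_mset B \<Gamma>)) R'"
  unfolding covering_branching_def labels_eq by auto

lemma covering_add_connected:
  "covering_branching R \<Gamma> R' \<Longrightarrow> connected R' x y \<Longrightarrow> covering_branching (add_mset (x, y) R) \<Gamma> R'"
  unfolding covering_branching_def labels_eq by auto

lemma covering_add_edge:
  assumes cov: "covering_branching R \<Gamma> R'" and "set_mset \<Gamma> \<subseteq> set_mset \<Gamma>'"
    and ax: "(a, x) \<in> (set_mset R')\<^sup>*" and "(b, y) \<in> (set_mset R')\<^sup>*"
    and "b \<notin> Range (set_mset R')" "(b, a) \<notin> (set_mset R')\<^sup>*"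
  shows "covering_branching (add_mset (x, y) R) \<Gamma>' (add_mset (a, b) R')"
proof -
  from cov have "branching (set_mset R')"
    by (simp add: covering_branching_def)
  then have "branching (set_mset (add_mset (a, b) R'))"
    using assms(5,6) by (simp add: branching_insert)
  moreover have "insert x (insert y (labels (R, \<Gamma>))) \<subseteq> labels (add_mset (x, y) R, \<Gamma>')"
    using assms(2) by (auto simp: labels_eq Field_insert)
  with cov rtrancl_eq_or_in_Field[OF ax] rtrancl_eq_or_in_Field[OF assms(4)]
  have "Field (set_mset (add_mset (a, b) R')) \<subseteq> labels (add_mset (x, y) R, \<Gamma>')"
    unfolding covering_branching_def set_mset_add_mset_insert Field_insert by blast
  moreover have "connected R' x a" "connected R' b y"
    using ax assms(4) by (auto intro: rtrancl_imp_connected connected_sym)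
  then have "connected (add_mset (a, b) R') x y"
    by (meson connected_add_mset connected_if_mem connected_trans union_single_eq_member)
  moreover have "\<forall>(u, v) \<in># R. connected (add_mset (a, b) R') u v"
    using cov unfolding covering_branching_def by (auto intro: connected_add_mset)
  ultimately show ?thesis
    unfolding covering_branching_def by auto
qed

lemma covering_add_fresh_edge:
  assumes "covering_branching R \<Gamma> R'" "set_mset \<Gamma> \<subseteq> set_mset \<Gamma>'" "fresh v (R, \<Gamma>)" "u \<noteq> v"
  shows "covering_branching (add_mset (u, v) R) \<Gamma>' (add_mset (u, v) R')"
proof -
  from assms(1,3) have "v \<notin> Field (set_mset R')"
    unfolding covering_branching_def fresh_def by blast
  then have "v \<notin> Range (set_mset R')" "(v, u) \<notin> (set_mset R')\<^sup>*"
    using assms(4) rtrancl_eq_or_in_Field[of v u "set_mset R'"] by (auto simp: Field_def)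
  with assms(1,2) show ?thesis
    by (intro covering_add_edge) auto
qed

lemma covering_add_edge_between_roots:
  assumes "covering_branching R \<Gamma> R'" "\<not> connected R' x y"
    and "(a, x) \<in> (set_mset R')\<^sup>*" "(b, y) \<in> (set_mset R')\<^sup>*" "b \<notin> Range (set_mset R')"
  shows "covering_branching (add_mset (x, y) R) \<Gamma> (add_mset (a, b) R')"
proof -
  have "(b, a) \<notin> (set_mset R')\<^sup>*"
    using assms(2-4) by (metis rtrancl_imp_connected connected_sym connected_trans)
  with assms show ?thesis
    by (intro covering_add_edge) auto
qed

lemma deriv_forestlike_apc:
  assumes "0 < n" and cov: "covering_branching R \<Gamma> R'"
    and IH: "\<And>k j R''. k \<le> n - 1 \<Longrightarrow> k + 1 \<le> j \<Longrightarrow> j \<le> n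
      \<Longrightarrow> covering_branching (add_mset (ws k, ws j) R) \<Gamma> R'' \<Longrightarrow> deriv forestlike n (R'', \<Gamma>)"
  shows "deriv forestlike n (R', \<Gamma>)"
proof -
  let ?pair = "\<lambda>k j. k \<le> n - 1 \<and> k + 1 \<le> j \<and> j \<le> n"
  consider (joined) k j where "?pair k j" "connected R' (ws k) (ws j)"
    | (apart) "\<And>k j. ?pair k j \<Longrightarrow> \<not> connected R' (ws k) (ws j)"
    by blast
  then show ?thesis
  proof cases
    case joined
    with cov have "covering_branching (add_mset (ws k, ws j) R) \<Gamma> R'"
      by (simp add: covering_add_connected)
    with joined(1) show ?thesis by (auto intro: IH)
  next
    case apart
    from cov have "acyclic (set_mset R')"
      by (simp add: covering_branching_def branching_def)
    then obtain root where root: "\<And>x. (root x, x) \<in> (set_mset R')\<^sup>*"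
      "\<And>x. root x \<notin> Range (set_mset R')"
      using finite_acyclic_root_ancestors[OF finite_set_mset] by metis
    have "deriv forestlike n (add_mset (root (ws k), root (ws j)) R', \<Gamma>)" if "?pair k j" for k j
    proof -
      from cov apart[OF that] root(1) root(1) root(2)
      have "covering_branching (add_mset (ws k, ws j) R) \<Gamma> (add_mset (root (ws k), root (ws j)) R')"
        by (rule covering_add_edge_between_roots)
      with that show ?thesis by (auto intro: IH)
    qed
    with covering_forestlike[OF cov] assms(1) show ?thesis
      by (intro deriv.apc[where ws = "root \<circ> ws"]) auto
  qed
qed

lemma deriv_forestlike_if_covering:
  assumes "derivable n S" "covering_branching (fst S) (snd S) R'"
  shows "deriv forestlike n (R', snd S)"
  using assms
proof (induction arbitrary: R' rule: deriv.induct)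
  case (id R w p \<Gamma>)
  then show ?case
    by (auto intro: deriv.id covering_forestlike)
next
  case (conj R w \<phi> \<psi> \<Gamma>)
  then have cov: "covering_branching R (add_mset (w, And \<phi> \<psi>) \<Gamma>) R'" by simp
  with conj.IH show ?case
    by (simp add: covering_add_formula
        deriv.conj[where P = forestlike, OF covering_forestlike[OF cov]])
next
  case (disj R w \<phi> \<psi> \<Gamma>)
  then have cov: "covering_branching R (add_mset (w, Or \<phi> \<psi>) \<Gamma>) R'" by simp
  with disj.IH show ?case
    by (simp add: covering_add_formula
        deriv.disj[where P = forestlike, OF covering_forestlike[OF cov]])
next
  case (box R w \<phi> \<Gamma> v)
  then have cov: "covering_branching R (add_mset (w, Box \<phi>) \<Gamma>) R'" by simp
  with box.IH show ?case
    by (simp add: covering_add_formula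
        deriv.box[where P = forestlike, OF covering_forestlike[OF cov] covering_fresh[OF cov box.hyps(2)]])
next
  case (dia R w \<phi> \<Gamma> u)
  then have cov: "covering_branching R (add_mset (w, Dia \<phi>) \<Gamma>) R'" by simp
  with dia.IH show ?case
    by (simp add: covering_add_formula
        deriv.dia[where P = forestlike and u = u, OF covering_forestlike[OF cov]])
next
  case (ioa R \<Gamma> v u)
  then have cov: "covering_branching R \<Gamma> R'" by simp
  show ?case
  proof (cases "u = v")
    case True \<comment> \<open>the fresh label may be its own source; the loop R_1 v v joins nothing\<close>
    with cov ioa.IH show ?thesis
      by (simp add: covering_add_connected connected_refl)
  next
    case False
    with cov ioa.hyps(2) ioa.IH show ?thesis
      by (simp add: covering_add_fresh_edge deriv.ioa[where P = forestlike and u = u,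
            OF covering_forestlike[OF cov] covering_fresh[OF cov ioa.hyps(2)]])
  qed
next
  case (stit R w \<phi> \<Gamma> v)
  then have cov: "covering_branching R (add_mset (w, Stit \<phi>) \<Gamma>) R'" by simp
  from stit.hyps(2) have "w \<noteq> v"
    by (auto simp: fresh_def labels_def)
  with cov stit.hyps(2) have "covering_branching (add_mset (w, v) R)
      (add_mset (w, Stit \<phi>) (add_mset (v, \<phi>) \<Gamma>)) (add_mset (w, v) R')"
    by (intro covering_add_fresh_edge) auto
  with stit.IH
  have "deriv forestlike n (add_mset (w, v) R', add_mset (w, Stit \<phi>) (add_mset (v, \<phi>) \<Gamma>))"
    by simp
  with covering_forestlike[OF cov] covering_fresh[OF cov stit.hyps(2)] show ?case
    unfolding snd_conv by (rule deriv.stit)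
next
  case (pr R w \<phi> \<Gamma> u)
  then have cov: "covering_branching R (add_mset (w, DStit \<phi>) \<Gamma>) R'" by simp
  with pr.IH show ?case
    by (simp add: covering_add_formula
        deriv.pr[where P = forestlike, OF covering_forestlike[OF cov] covering_connected[OF cov pr.hyps(2)]])
next
  case (apc R \<Gamma> ws)
  from apc.prems have "covering_branching R \<Gamma> R'" by simp
  moreover from apc.IH have "\<And>k j R''. k \<le> n - 1 \<Longrightarrow> k + 1 \<le> j \<Longrightarrow> j \<le> n
      \<Longrightarrow> covering_branching (add_mset (ws k, ws j) R) \<Gamma> R'' \<Longrightarrow> deriv forestlike n (R'', \<Gamma>)"
    by simp
  ultimately have "deriv forestlike n (R', \<Gamma>)"
    by (rule deriv_forestlike_apc[OF apc.hyps(2)])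
  then show ?case by simp
qed

theorem corollary2:
  fixes n :: nat and w :: label and \<phi> :: form
  assumes "derivable n ({#}, {#(w, \<phi>)#})"
  shows "deriv forestlike n ({#}, {#(w, \<phi>)#})"
proof -
  have "covering_branching {#} {#(w, \<phi>)#} {#}"
    by (simp add: covering_branching_def branching_def acyclic_def)
  with deriv_forestlike_if_covering[OF assms] show ?thesis by simp
qed

end
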